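(* Let $G$ and $H$ be connected graphs, each of order at least $2$. Then $dim_s(G\square H)=2$ if and only if both $G$ and $H$ are paths.
   Context: Graphs are finite, simple, undirected; for connected $G$, $d_G$ is the shortest-path distance and $I_G[u,v]$ is the set of vertices lying on some shortest $u$–$v$ path. A vertex $w$ strongly resolves vertices $u,v$ if $v\in I_G[u,w]$ or $u\in I_G[v,w]$. A strong resolving set of $G$ is a set $S\subseteq V(G)$ such that every pair of vertices is strongly resolved by some vertex of $S$; $dim_s(G)$ is the minimum cardinality of such a set. $G\square H$ denotes the Cartesian product: vertex set $V(G)\times V(H)$, $(a,b)\sim(c,d)$ iff ($a=c$ and $bd\in E(H)$) or ($b=d$ and $ac\in E(G)$). *)

theory Defs
  imports Main
begin

definition graph :: "'a set \<Rightarrow> ('a \<Rightarrow> 'a \<Rightarrow> bool) \<Rightarrow> bool" where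
  "graph V E \<longleftrightarrow> finite V \<and>
     (\<forall>u v. E u v \<longrightarrow> u \<in> V \<and> v \<in> V \<and> u \<noteq> v \<and> E v u)"

definition walk :: "'a set \<Rightarrow> ('a \<Rightarrow> 'a \<Rightarrow> bool) \<Rightarrow> 'a list \<Rightarrow> bool" where
  "walk V E xs \<longleftrightarrow> xs \<noteq> [] \<and> set xs \<subseteq> V \<and>
     (\<forall>i. Suc i < length xs \<longrightarrow> E (xs ! i) (xs ! Suc i))"

definition connected_graph :: "'a set \<Rightarrow> ('a \<Rightarrow> 'a \<Rightarrow> bool) \<Rightarrow> bool" where
  "connected_graph V E \<longleftrightarrow> V \<noteq> {} \<and>
     (\<forall>u\<in>V. \<forall>v\<in>V. \<exists>xs. walk V E xs \<and> hd xs = u \<and> last xs = v)"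

definition gdist :: "'a set \<Rightarrow> ('a \<Rightarrow> 'a \<Rightarrow> bool) \<Rightarrow> 'a \<Rightarrow> 'a \<Rightarrow> nat" where
  "gdist V E u v = (LEAST n. \<exists>xs. walk V E xs \<and> hd xs = u \<and> last xs = v \<and> length xs = Suc n)"

definition interval :: "'a set \<Rightarrow> ('a \<Rightarrow> 'a \<Rightarrow> bool) \<Rightarrow> 'a \<Rightarrow> 'a \<Rightarrow> 'a set" where
  "interval V E u v = {w. \<exists>xs. walk V E xs \<and> hd xs = u \<and> last xs = v \<and>
       length xs = Suc (gdist V E u v) \<and> w \<in> set xs}"

definition strongly_resolves :: "'a set \<Rightarrow> ('a \<Rightarrow> 'a \<Rightarrow> bool) \<Rightarrow> 'a \<Rightarrow> 'a \<Rightarrow> 'a \<Rightarrow> bool" where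
  "strongly_resolves V E w u v \<longleftrightarrow> v \<in> interval V E u w \<or> u \<in> interval V E v w"

definition strong_resolving_set :: "'a set \<Rightarrow> ('a \<Rightarrow> 'a \<Rightarrow> bool) \<Rightarrow> 'a set \<Rightarrow> bool" where
  "strong_resolving_set V E S \<longleftrightarrow> S \<subseteq> V \<and>
     (\<forall>u\<in>V. \<forall>v\<in>V. \<exists>w\<in>S. strongly_resolves V E w u v)"

definition strong_metric_dim :: "'a set \<Rightarrow> ('a \<Rightarrow> 'a \<Rightarrow> bool) \<Rightarrow> nat" where
  "strong_metric_dim V E = (LEAST k. \<exists>S. strong_resolving_set V E S \<and> card S = k)"

definition cart_adj :: "('a \<Rightarrow> 'a \<Rightarrow> bool) \<Rightarrow> ('b \<Rightarrow> 'b \<Rightarrow> bool) \<Rightarrow> ('a \<times> 'b) \<Rightarrow> ('a \<times> 'b) \<Rightarrow> bool" where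
  "cart_adj E F p q \<longleftrightarrow> (fst p = fst q \<and> F (snd p) (snd q)) \<or> (snd p = snd q \<and> E (fst p) (fst q))"

definition is_path_graph :: "'a set \<Rightarrow> ('a \<Rightarrow> 'a \<Rightarrow> bool) \<Rightarrow> bool" where
  "is_path_graph V E \<longleftrightarrow> (\<exists>xs. distinct xs \<and> set xs = V \<and>
     (\<forall>u v. E u v \<longleftrightarrow> (\<exists>i. Suc i < length xs \<and> {u, v} = {xs ! i, xs ! Suc i})))"

end

theory Submission
  imports Defs
begin

text \<open>Distances in \<open>G \<box> H\<close> add coordinatewise, so geodesic intervals of the product are
  products of intervals of the factors. Hence one vertex \<open>(a, b)\<close> never strongly resolves
  \<open>(a', b)\<close> and \<open>(a, b')\<close>. Suppose \<open>{(a, b), (c, d)}\<close> is a strong resolving set and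
  \<open>g\<^sub>1 \<noteq> g\<^sub>2\<close> are equidistant from \<open>a\<close>. Then \<open>(a, b)\<close> resolves no pair with first coordinates
  \<open>g\<^sub>1, g\<^sub>2\<close>, and taking \<open>h \<noteq> d\<close>, the pairs \<open>(g\<^sub>1, d), (g\<^sub>2, h)\<close> and \<open>(g\<^sub>1, h), (g\<^sub>2, d)\<close> put each
  of \<open>g\<^sub>1, g\<^sub>2\<close> on a geodesic from the other to \<open>c\<close>, which is absurd. So \<open>x \<mapsto> d(x, a)\<close> is
  injective; as its values form an interval \<open>{0..K}\<close>, every distance level is a single vertex and
  \<open>G\<close> is the path listing them in order. Conversely, in a grid of two paths, two corners on a
  common side form a strong resolving set.\<close>

lemma walk_Nil [simp]: "\<not> walk V E []"
  by (simp add: walk_def)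

lemma walk_single [simp]: "walk V E [x] \<longleftrightarrow> x \<in> V"
  by (simp add: walk_def)

lemma walk_Cons_Cons: "walk V E (x # y # xs) \<longleftrightarrow> x \<in> V \<and> E x y \<and> walk V E (y # xs)"
  unfolding walk_def by (auto simp: less_Suc_eq_0_disj)

lemma walk_set_subset: "walk V E xs \<Longrightarrow> x \<in> set xs \<Longrightarrow> x \<in> V"
  by (auto simp: walk_def)

lemma walk_append_tl:
  "walk V E p \<Longrightarrow> walk V E q \<Longrightarrow> last p = hd q \<Longrightarrow> walk V E (p @ tl q)"
proof (induction p rule: induct_list012)
  case (2 x)
  then show ?case by (cases q) auto
next
  case (3 x y p)
  then show ?case by (auto simp: walk_Cons_Cons)
qed simp

lemma append_tl_props:
  assumes "p \<noteq> []" "q \<noteq> []" "last p = hd q"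
  shows "hd (p @ tl q) = hd p" "last (p @ tl q) = last q"
    "length (p @ tl q) = length p + length q - 1" "set p \<subseteq> set (p @ tl q)"
  using assms by (cases q; auto)+

lemma walk_take: "walk V E xs \<Longrightarrow> 0 < n \<Longrightarrow> walk V E (take n xs)"
  unfolding walk_def by (auto dest: in_set_takeD)

lemma walk_drop: "walk V E xs \<Longrightarrow> n < length xs \<Longrightarrow> walk V E (drop n xs)"
  unfolding walk_def by (auto dest: in_set_dropD)

lemma walk_map:
  assumes "walk V E xs" "\<And>x. x \<in> V \<Longrightarrow> f x \<in> V'" "\<And>x y. E x y \<Longrightarrow> E' (f x) (f y)"
  shows "walk V' E' (map f xs)"
  using assms unfolding walk_def by auto

lemma walk_rev:
  assumes "\<And>x y. E x y \<Longrightarrow> E y x" and "walk V E xs"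
  shows "walk V E (rev xs)"
  unfolding walk_def
proof (intro conjI allI impI)
  fix i assume i: "Suc i < length (rev xs)"
  define k where "k = length xs - Suc (Suc i)"
  have "Suc k < length xs" "length xs - Suc i = Suc k" using i by (auto simp: k_def)
  then show "E (rev xs ! i) (rev xs ! Suc i)"
    using assms i unfolding walk_def by (auto simp: rev_nth k_def)
qed (use assms(2) in \<open>auto simp: walk_def\<close>)

lemma walk_lipschitz:
  assumes "walk V E xs" and "\<And>x y. x \<in> V \<Longrightarrow> y \<in> V \<Longrightarrow> E x y \<Longrightarrow> f x \<le> f y + 1"
  shows "f (hd xs) \<le> f (last xs) + (length xs - 1)"
  using assms(1)
proof (induction xs rule: induct_list012)
  case (3 x y xs)
  then have "x \<in> V" "y \<in> V" "E x y" "walk V E (y # xs)"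
    by (auto simp: walk_Cons_Cons walk_def)
  with 3 assms(2)[of x y] show ?case by simp
qed simp_all

lemma gdist_le_walk:
  "walk V E xs \<Longrightarrow> hd xs = u \<Longrightarrow> last xs = v \<Longrightarrow> gdist V E u v \<le> length xs - 1"
  unfolding gdist_def by (rule Least_le) (cases xs, auto)

lemma gdist_shortest_walk:
  assumes "connected_graph V E" "u \<in> V" "v \<in> V"
  obtains xs where "walk V E xs" "hd xs = u" "last xs = v" "length xs = Suc (gdist V E u v)"
proof -
  obtain xs where "walk V E xs" "hd xs = u" "last xs = v"
    using assms unfolding connected_graph_def by blast
  then have "\<exists>n xs. walk V E xs \<and> hd xs = u \<and> last xs = v \<and> length xs = Suc n"
    by (metis Suc_pred length_greater_0_conv walk_Nil)
  then have "\<exists>xs. walk V E xs \<and> hd xs = u \<and> last xs = v \<and> length xs = Suc (gdist V E u v)"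
    unfolding gdist_def by (rule LeastI_ex)
  with that show ?thesis by blast
qed

lemma gdist_self [simp]: "u \<in> V \<Longrightarrow> gdist V E u u = 0"
  using gdist_le_walk[of V E "[u]" u u] by simp

lemma gdist_eq_0_iff:
  assumes "connected_graph V E" "u \<in> V" "v \<in> V"
  shows "gdist V E u v = 0 \<longleftrightarrow> u = v"
proof
  assume "gdist V E u v = 0"
  then obtain xs where "hd xs = u" "last xs = v" "length xs = 1"
    using gdist_shortest_walk[OF assms] by (metis One_nat_def)
  then show "u = v" by (cases xs) auto
qed (use assms in simp)

lemma gdist_edge_le_1: "E u v \<Longrightarrow> u \<in> V \<Longrightarrow> v \<in> V \<Longrightarrow> gdist V E u v \<le> 1"
  using gdist_le_walk[of V E "[u, v]" u v] by (simp add: walk_Cons_Cons)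

lemma gdist_triangle:
  assumes "connected_graph V E" "u \<in> V" "x \<in> V" "w \<in> V"
  shows "gdist V E u w \<le> gdist V E u x + gdist V E x w"
proof -
  obtain p where p: "walk V E p" "hd p = u" "last p = x" "length p = Suc (gdist V E u x)"
    using gdist_shortest_walk[OF assms(1,2,3)] .
  obtain q where q: "walk V E q" "hd q = x" "last q = w" "length q = Suc (gdist V E x w)"
    using gdist_shortest_walk[OF assms(1,3,4)] .
  have "p \<noteq> []" "q \<noteq> []" using p q by auto
  with p q show ?thesis
    using gdist_le_walk[OF walk_append_tl[OF p(1) q(1)]] append_tl_props by fastforce
qed

lemma gdist_lipschitz:
  assumes "connected_graph V E" "u \<in> V" "v \<in> V"
    and "\<And>x y. x \<in> V \<Longrightarrow> y \<in> V \<Longrightarrow> E x y \<Longrightarrow> f x \<le> f y + 1"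
  shows "f u \<le> f v + gdist V E u v"
proof -
  obtain xs where "walk V E xs" "hd xs = u" "last xs = v" "length xs = Suc (gdist V E u v)"
    using gdist_shortest_walk[OF assms(1-3)] .
  with walk_lipschitz[of V E xs f] assms(4) show ?thesis by auto
qed

lemma mem_interval_iff:
  assumes "connected_graph V E" "u \<in> V" "w \<in> V"
  shows "x \<in> interval V E u w \<longleftrightarrow> x \<in> V \<and> gdist V E u x + gdist V E x w = gdist V E u w"
proof
  assume "x \<in> interval V E u w"
  then obtain xs where xs: "walk V E xs" "hd xs = u" "last xs = w"
      "length xs = Suc (gdist V E u w)" "x \<in> set xs"
    unfolding interval_def by blast
  obtain k where k: "k < length xs" "xs ! k = x" using xs(5) by (auto simp: in_set_conv_nth)
  have x: "x \<in> V" using walk_set_subset[OF xs(1,5)] .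
  have "hd (take (Suc k) xs) = u" using xs by (auto simp: hd_take)
  moreover have "last (take (Suc k) xs) = x" using k by (simp add: take_Suc_conv_app_nth)
  ultimately have "gdist V E u x \<le> length (take (Suc k) xs) - 1"
    using xs by (intro gdist_le_walk walk_take) auto
  moreover have "gdist V E x w \<le> length (drop k xs) - 1"
    using xs k by (intro gdist_le_walk walk_drop) (auto simp: hd_drop_conv_nth)
  moreover have "length (take (Suc k) xs) - 1 + (length (drop k xs) - 1) = gdist V E u w"
    using k xs(4) by simp
  ultimately show "x \<in> V \<and> gdist V E u x + gdist V E x w = gdist V E u w"
    using gdist_triangle[OF assms(1,2) x assms(3)] x by linarith
next
  assume x: "x \<in> V \<and> gdist V E u x + gdist V E x w = gdist V E u w"
  obtain p where p: "walk V E p" "hd p = u" "last p = x" "length p = Suc (gdist V E u x)"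
    using gdist_shortest_walk[OF assms(1,2)] x by blast
  obtain q where q: "walk V E q" "hd q = x" "last q = w" "length q = Suc (gdist V E x w)"
    using gdist_shortest_walk[OF assms(1) _ assms(3)] x by blast
  have "p \<noteq> []" "q \<noteq> []" "last p = hd q" using p q by auto
  note pq = walk_append_tl[OF p(1) q(1) \<open>last p = hd q\<close>] append_tl_props[OF this]
  have "x \<in> set (p @ tl q)" using pq(5) p \<open>p \<noteq> []\<close> by auto
  with pq p q x show "x \<in> interval V E u w"
    unfolding interval_def by (intro CollectI exI[of _ "p @ tl q"]) auto
qed

lemma interval_self:
  assumes "connected_graph V E" "u \<in> V"
  shows "interval V E u u = {u}"
  using assms by (auto simp: mem_interval_iff gdist_eq_0_iff)

lemma interval_antisym:
  assumes "connected_graph V E" "x \<in> V" "y \<in> V" "w \<in> V"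
    and "x \<in> interval V E y w" "y \<in> interval V E x w"
  shows "x = y"
  using assms gdist_eq_0_iff[OF assms(1,2,3)] by (simp add: mem_interval_iff)

lemma eq_if_mem_interval_gdist_eq:
  assumes "connected_graph V E" "x \<in> V" "a \<in> V"
    and "y \<in> interval V E x a" "gdist V E x a = gdist V E y a"
  shows "x = y"
  using assms by (auto simp: mem_interval_iff gdist_eq_0_iff)

lemma walk_cart:
  assumes p: "walk V E p" "hd p = g1" "last p = g2"
    and q: "walk W F q" "hd q = h1" "last q = h2"
  obtains zs where "walk (V \<times> W) (cart_adj E F) zs" "hd zs = (g1, h1)" "last zs = (g2, h2)"
    "length zs = length p + length q - 1"
proof -
  have "p \<noteq> []" "q \<noteq> []" using p q by auto
  then have "h1 \<in> W" "g2 \<in> V" using p q by (auto intro: walk_set_subset)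
  define p' where "p' = map (\<lambda>x. (x, h1)) p"
  define q' where "q' = map (\<lambda>y. (g2, y)) q"
  have "walk (V \<times> W) (cart_adj E F) p'" "walk (V \<times> W) (cart_adj E F) q'"
    unfolding p'_def q'_def using p q \<open>h1 \<in> W\<close> \<open>g2 \<in> V\<close>
    by (auto intro!: walk_map simp: cart_adj_def)
  moreover have "p' \<noteq> []" "q' \<noteq> []" "last p' = hd q'"
    using \<open>p \<noteq> []\<close> \<open>q \<noteq> []\<close> p q by (auto simp: p'_def q'_def last_map hd_map)
  ultimately show ?thesis
    using that[OF walk_append_tl] append_tl_props[of p' q'] p q \<open>p \<noteq> []\<close> \<open>q \<noteq> []\<close>
    by (simp add: p'_def q'_def last_map hd_map)
qed

lemma connected_graph_cart:
  assumes "connected_graph V E" "connected_graph W F"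
  shows "connected_graph (V \<times> W) (cart_adj E F)"
  unfolding connected_graph_def
proof (intro conjI ballI)
  show "V \<times> W \<noteq> {}" using assms unfolding connected_graph_def by auto
  fix u v assume "u \<in> V \<times> W" "v \<in> V \<times> W"
  then obtain g1 h1 g2 h2 where uv: "u = (g1, h1)" "v = (g2, h2)"
    and "g1 \<in> V" "g2 \<in> V" "h1 \<in> W" "h2 \<in> W"
    by auto
  then obtain p q where "walk V E p" "hd p = g1" "last p = g2" "walk W F q" "hd q = h1" "last q = h2"
    using assms unfolding connected_graph_def by meson
  then show "\<exists>xs. walk (V \<times> W) (cart_adj E F) xs \<and> hd xs = u \<and> last xs = v"
    using walk_cart uv by metis
qed

lemma gdist_cart:
  assumes G: "connected_graph V E" and H: "connected_graph W F"
    and "g1 \<in> V" "g2 \<in> V" "h1 \<in> W" "h2 \<in> W"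
  shows "gdist (V \<times> W) (cart_adj E F) (g1, h1) (g2, h2) = gdist V E g1 g2 + gdist W F h1 h2"
proof (rule antisym)
  obtain p where p: "walk V E p" "hd p = g1" "last p = g2" "length p = Suc (gdist V E g1 g2)"
    using gdist_shortest_walk[OF G] assms by metis
  obtain q where q: "walk W F q" "hd q = h1" "last q = h2" "length q = Suc (gdist W F h1 h2)"
    using gdist_shortest_walk[OF H] assms by metis
  obtain zs where "walk (V \<times> W) (cart_adj E F) zs" "hd zs = (g1, h1)" "last zs = (g2, h2)"
      "length zs = length p + length q - 1"
    using walk_cart[OF p(1-3) q(1-3)] .
  then show "gdist (V \<times> W) (cart_adj E F) (g1, h1) (g2, h2) \<le> gdist V E g1 g2 + gdist W F h1 h2"
    using gdist_le_walk p(4) q(4) by fastforce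
next
  define f where "f z = gdist V E (fst z) g2 + gdist W F (snd z) h2" for z
  have "f x \<le> f y + 1" if "x \<in> V \<times> W" "y \<in> V \<times> W" "cart_adj E F x y" for x y
    using that gdist_triangle[OF G, of "fst x" "fst y" g2] gdist_edge_le_1[of E "fst x" "fst y" V]
      gdist_triangle[OF H, of "snd x" "snd y" h2] gdist_edge_le_1[of F "snd x" "snd y" W] assms
    by (auto simp: f_def cart_adj_def mem_Times_iff)
  then have "f (g1, h1) \<le> f (g2, h2) + gdist (V \<times> W) (cart_adj E F) (g1, h1) (g2, h2)"
    using assms by (intro gdist_lipschitz connected_graph_cart) auto
  then show "gdist V E g1 g2 + gdist W F h1 h2 \<le> gdist (V \<times> W) (cart_adj E F) (g1, h1) (g2, h2)"
    using assms by (simp add: f_def)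
qed

lemma interval_cart:
  assumes G: "connected_graph V E" and H: "connected_graph W F"
    and "g \<in> V" "a \<in> V" "h \<in> W" "b \<in> W"
  shows "interval (V \<times> W) (cart_adj E F) (g, h) (a, b) = interval V E g a \<times> interval W F h b"
proof -
  have "(x, y) \<in> interval (V \<times> W) (cart_adj E F) (g, h) (a, b) \<longleftrightarrow>
        (x, y) \<in> interval V E g a \<times> interval W F h b" for x y
  proof (cases "x \<in> V \<and> y \<in> W")
    case True
    then show ?thesis
      using assms gdist_triangle[OF G, of g x a] gdist_triangle[OF H, of h y b]
      by (simp add: mem_interval_iff connected_graph_cart gdist_cart) linarith
  qed (use assms in \<open>auto simp: mem_interval_iff connected_graph_cart\<close>)
  then show ?thesis by auto
qed

lemma strongly_resolves_cart_iff:
  assumes "connected_graph V E" "connected_graph W F"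
    and "g1 \<in> V" "g2 \<in> V" "a \<in> V" "h1 \<in> W" "h2 \<in> W" "b \<in> W"
  shows "strongly_resolves (V \<times> W) (cart_adj E F) (a, b) (g1, h1) (g2, h2) \<longleftrightarrow>
         (g2 \<in> interval V E g1 a \<and> h2 \<in> interval W F h1 b) \<or>
         (g1 \<in> interval V E g2 a \<and> h1 \<in> interval W F h2 b)"
  using assms by (simp add: strongly_resolves_def interval_cart)

lemma strong_resolving_set_cart_swap:
  assumes G: "connected_graph V E" and H: "connected_graph W F"
    and S: "strong_resolving_set (V \<times> W) (cart_adj E F) S"
  shows "strong_resolving_set (W \<times> V) (cart_adj F E) (prod.swap ` S)"
  unfolding strong_resolving_set_def
proof (intro conjI ballI)
  show "prod.swap ` S \<subseteq> W \<times> V" using S by (auto simp: strong_resolving_set_def)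
  fix u v assume "u \<in> W \<times> V" "v \<in> W \<times> V"
  then obtain h1 g1 h2 g2 where uv: "u = (h1, g1)" "v = (h2, g2)"
    and mem: "g1 \<in> V" "g2 \<in> V" "h1 \<in> W" "h2 \<in> W"
    by auto
  then obtain a b where "(a, b) \<in> S" "strongly_resolves (V \<times> W) (cart_adj E F) (a, b) (g1, h1) (g2, h2)"
    using S unfolding strong_resolving_set_def by (metis SigmaI surj_pair)
  moreover have "a \<in> V" "b \<in> W" using \<open>(a, b) \<in> S\<close> S by (auto simp: strong_resolving_set_def)
  ultimately have "strongly_resolves (W \<times> V) (cart_adj F E) (b, a) u v"
    using mem uv by (auto simp: strongly_resolves_cart_iff[OF G H] strongly_resolves_cart_iff[OF H G])
  moreover have "(b, a) \<in> prod.swap ` S" using \<open>(a, b) \<in> S\<close> by force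
  ultimately show "\<exists>w\<in>prod.swap ` S. strongly_resolves (W \<times> V) (cart_adj F E) w u v" by blast
qed

lemma is_path_graphE:
  assumes "is_path_graph V E"
  obtains xs where "distinct xs" "set xs = V"
    "\<And>u v. E u v \<longleftrightarrow> (\<exists>i. Suc i < length xs \<and> {u, v} = {xs ! i, xs ! Suc i})"
  using assms unfolding is_path_graph_def by blast

lemma gdist_path_graph:
  assumes c: "connected_graph V E" and xs: "distinct xs" "set xs = V"
    and adj: "\<And>u v. E u v \<longleftrightarrow> (\<exists>i. Suc i < length xs \<and> {u, v} = {xs ! i, xs ! Suc i})"
    and ij: "i < length xs" "j < length xs"
  shows "gdist V E (xs ! i) (xs ! j) = (if i \<le> j then j - i else i - j)"
proof -
  have sym: "E u v \<Longrightarrow> E v u" for u v by (simp add: adj insert_commute)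
  have walk: "walk V E xs" using xs ij by (auto simp: walk_def adj)
  have upper: "gdist V E (xs ! i) (xs ! j) \<le> j - i \<and> gdist V E (xs ! j) (xs ! i) \<le> j - i"
    if "i \<le> j" "j < length xs" for i j
  proof -
    define ys where "ys = drop i (take (Suc j) xs)"
    have "walk V E ys" unfolding ys_def using that by (intro walk_drop walk_take walk) auto
    moreover have "ys \<noteq> []" "hd ys = xs ! i" "last ys = xs ! j" "length ys = Suc (j - i)"
      using that by (auto simp: ys_def hd_drop_conv_nth last_conv_nth)
    ultimately show ?thesis
      using gdist_le_walk[of V E ys] gdist_le_walk[of V E "rev ys"] walk_rev[of E V ys] sym
      by (simp add: hd_rev last_rev)
  qed
  define pos where "pos = inv_into {..<length xs} ((!) xs)"
  have bij: "bij_betw ((!) xs) {..<length xs} V" using xs by (simp add: bij_betw_nth)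
  have pos: "pos (xs ! k) = k" if "k < length xs" for k
    using bij that by (simp add: pos_def bij_betw_def)
  have "pos x \<le> pos y + 1 \<and> length xs - pos x \<le> length xs - pos y + 1" if xy: "E x y" for x y
  proof -
    obtain k where "Suc k < length xs" "{x, y} = {xs ! k, xs ! Suc k}" using iffD1[OF adj xy] by blast
    then show ?thesis using pos[of k] pos[of "Suc k"] by (auto simp: doubleton_eq_iff)
  qed
  then have "pos (xs ! i) \<le> pos (xs ! j) + gdist V E (xs ! i) (xs ! j)"
    and "length xs - pos (xs ! i) \<le> length xs - pos (xs ! j) + gdist V E (xs ! i) (xs ! j)"
    using xs ij by (intro gdist_lipschitz[OF c]; force)+
  then show ?thesis using upper[of i j] upper[of j i] pos ij by auto
qed

lemma mem_interval_path_graph_iff: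
  assumes "connected_graph V E" "distinct xs" "set xs = V"
    and "\<And>u v. E u v \<longleftrightarrow> (\<exists>i. Suc i < length xs \<and> {u, v} = {xs ! i, xs ! Suc i})"
    and "i < length xs" "j < length xs" "k < length xs"
  shows "xs ! k \<in> interval V E (xs ! i) (xs ! j) \<longleftrightarrow> i \<le> k \<and> k \<le> j \<or> j \<le> k \<and> k \<le> i"
  using assms by (auto simp: mem_interval_iff gdist_path_graph split: if_split_asm)

lemma is_path_graph_if_bij_betw:
  assumes bij: "bij_betw f V {..K}"
    and adj: "\<And>u v. E u v \<longleftrightarrow> u \<in> V \<and> v \<in> V \<and> (f v = Suc (f u) \<or> f u = Suc (f v))"
  shows "is_path_graph V E"
proof -
  define t where "t = inv_into V f"
  define xs where "xs = map t [0..<Suc K]"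
  have t_bij: "bij_betw t {..K} V" unfolding t_def by (rule bij_betw_inv_into[OF bij])
  have ft: "t i \<in> V \<and> f (t i) = i" if "i \<le> K" for i
    using bij that unfolding t_def bij_betw_def by (auto intro: inv_into_into f_inv_into_f)
  have tf: "t (f u) = u" "f u \<le> K" if "u \<in> V" for u
    using bij that unfolding t_def bij_betw_def by auto
  have nth: "xs ! i = t i" if "i \<le> K" for i
    using that unfolding xs_def by (simp del: upt_Suc)
  have "distinct xs" "set xs = V"
    using t_bij unfolding xs_def bij_betw_def
    by (simp_all add: distinct_map atLeast0LessThan lessThan_Suc_atMost del: upt_Suc)
  moreover have "E u v \<longleftrightarrow> (\<exists>i. Suc i < length xs \<and> {u, v} = {xs ! i, xs ! Suc i})" for u v
  proof
    have consecutive: "\<exists>i. Suc i < length xs \<and> {x, y} = {xs ! i, xs ! Suc i}"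
      if "x \<in> V" "y \<in> V" "f y = Suc (f x)" for x y
      using that tf[of x] tf[of y] nth[of "f x"] nth[of "f y"]
      by (intro exI[of _ "f x"]) (simp add: xs_def del: upt_Suc)
    assume "E u v"
    then have "u \<in> V" "v \<in> V" "f v = Suc (f u) \<or> f u = Suc (f v)" using adj by auto
    then show "\<exists>i. Suc i < length xs \<and> {u, v} = {xs ! i, xs ! Suc i}"
      using consecutive[of u v] consecutive[of v u] by (auto simp: insert_commute)
  next
    assume "\<exists>i. Suc i < length xs \<and> {u, v} = {xs ! i, xs ! Suc i}"
    then obtain i where i: "Suc i < length xs" "{u, v} = {xs ! i, xs ! Suc i}" by blast
    then have "Suc i \<le> K" by (simp add: xs_def del: upt_Suc)
    with i nth have "Suc i \<le> K" "{u, v} = {t i, t (Suc i)}" by simp_all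
    then show "E u v" using adj ft[of i] ft[of "Suc i"] by (auto simp: doubleton_eq_iff)
  qed
  ultimately show ?thesis unfolding is_path_graph_def by blast
qed

lemma gdist_step_towards:
  assumes "connected_graph V E" "a \<in> V" "x \<in> V" "gdist V E x a = Suc m"
  obtains y where "y \<in> V" "E x y" "gdist V E y a = m"
proof -
  obtain ws where ws: "walk V E ws" "hd ws = x" "last ws = a" "length ws = Suc (gdist V E x a)"
    using gdist_shortest_walk[OF assms(1,3,2)] .
  then obtain y r where ws_eq: "ws = x # y # r"
    using assms(4) by (cases ws; cases "tl ws") auto
  then have "E x y" "walk V E (y # r)" using ws(1) by (auto simp: walk_Cons_Cons)
  then have "y \<in> V" by (auto simp: walk_def)
  have "gdist V E y a \<le> m"
    using gdist_le_walk[OF \<open>walk V E (y # r)\<close>] ws ws_eq assms(4) by simp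
  moreover have "gdist V E x a \<le> gdist V E x y + gdist V E y a" "gdist V E x y \<le> 1"
    using gdist_triangle[OF assms(1,3) \<open>y \<in> V\<close> assms(2)] gdist_edge_le_1[of E x y V]
      \<open>E x y\<close> assms(3) \<open>y \<in> V\<close>
    by auto
  ultimately show ?thesis using that[OF \<open>y \<in> V\<close> \<open>E x y\<close>] assms(4) by linarith
qed

lemma gdist_intermediate_value:
  assumes "connected_graph V E" "a \<in> V"
  shows "x \<in> V \<Longrightarrow> i \<le> gdist V E x a \<Longrightarrow> \<exists>y\<in>V. gdist V E y a = i"
proof (induction "gdist V E x a - i" arbitrary: x)
  case (Suc n)
  then obtain m where m: "gdist V E x a = Suc m" by (cases "gdist V E x a") auto
  then obtain y where y: "y \<in> V" "gdist V E y a = m"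
    using gdist_step_towards[OF assms Suc.prems(1)] by blast
  show ?case
  proof (cases "i = Suc m")
    case True
    with Suc.prems m show ?thesis by auto
  next
    case False
    then have "i \<le> m" "n = gdist V E y a - i" using Suc.prems(2) Suc.hyps(2) m y(2) by auto
    then show ?thesis using Suc.hyps(1) y by blast
  qed
qed auto

lemma gdist_image_eq_atMost:
  assumes "connected_graph V E" "finite V" "a \<in> V"
  obtains K where "(\<lambda>x. gdist V E x a) ` V = {..K}"
proof
  define K where "K = Max ((\<lambda>x. gdist V E x a) ` V)"
  have "K \<in> (\<lambda>x. gdist V E x a) ` V" unfolding K_def using assms by (intro Max_in) auto
  then obtain x where "x \<in> V" "gdist V E x a = K" by blast
  show "(\<lambda>x. gdist V E x a) ` V = {..K}"
  proof
    show "(\<lambda>x. gdist V E x a) ` V \<subseteq> {..K}" using assms(2) by (auto simp: K_def)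
    show "{..K} \<subseteq> (\<lambda>x. gdist V E x a) ` V"
    proof
      fix i assume "i \<in> {..K}"
      then obtain y where "y \<in> V" "gdist V E y a = i"
        using gdist_intermediate_value[OF assms(1,3) \<open>x \<in> V\<close>] \<open>gdist V E x a = K\<close> by auto
      then show "i \<in> (\<lambda>x. gdist V E x a) ` V" by blast
    qed
  qed
qed

lemma adjacent_iff_gdist_Suc_if_inj_on_gdist:
  assumes g: "graph V E" and c: "connected_graph V E" and a: "a \<in> V"
    and inj: "inj_on (\<lambda>x. gdist V E x a) V"
  shows "E u v \<longleftrightarrow> u \<in> V \<and> v \<in> V \<and>
    (gdist V E v a = Suc (gdist V E u a) \<or> gdist V E u a = Suc (gdist V E v a))"
proof
  assume "E u v"
  then have "u \<in> V" "v \<in> V" "u \<noteq> v" "E v u" using g by (auto simp: graph_def)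
  then have "gdist V E u a \<noteq> gdist V E v a" using inj by (auto dest: inj_onD)
  moreover have "gdist V E u a \<le> gdist V E u v + gdist V E v a" "gdist V E u v \<le> 1"
    and "gdist V E v a \<le> gdist V E v u + gdist V E u a" "gdist V E v u \<le> 1"
    using gdist_triangle[OF c \<open>u \<in> V\<close> \<open>v \<in> V\<close> a] gdist_triangle[OF c \<open>v \<in> V\<close> \<open>u \<in> V\<close> a]
      gdist_edge_le_1[of E u v V] gdist_edge_le_1[of E v u V] \<open>E u v\<close> \<open>E v u\<close> \<open>u \<in> V\<close> \<open>v \<in> V\<close>
    by simp_all
  ultimately show "u \<in> V \<and> v \<in> V \<and>
    (gdist V E v a = Suc (gdist V E u a) \<or> gdist V E u a = Suc (gdist V E v a))"
    using \<open>u \<in> V\<close> \<open>v \<in> V\<close> by linarith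
next
  have closer: "E x y" if x: "x \<in> V" and y: "y \<in> V" and xy: "gdist V E x a = Suc (gdist V E y a)"
    for x y
  proof -
    obtain z where "z \<in> V" "E x z" "gdist V E z a = gdist V E y a"
      using gdist_step_towards[OF c a x xy] .
    moreover from this inj y have "z = y" by (auto dest: inj_onD)
    ultimately show "E x y" by simp
  qed
  have sym: "E x y \<Longrightarrow> E y x" for x y using g by (simp add: graph_def)
  assume "u \<in> V \<and> v \<in> V \<and>
    (gdist V E v a = Suc (gdist V E u a) \<or> gdist V E u a = Suc (gdist V E v a))"
  then show "E u v" using closer[of u v] closer[of v u] sym[of v u] by auto
qed

lemma is_path_graph_if_inj_on_gdist:
  assumes g: "graph V E" and c: "connected_graph V E" and a: "a \<in> V"
    and inj: "inj_on (\<lambda>x. gdist V E x a) V"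
  shows "is_path_graph V E"
proof -
  obtain K where "(\<lambda>x. gdist V E x a) ` V = {..K}"
    using gdist_image_eq_atMost[OF c _ a] g by (auto simp: graph_def)
  then have "bij_betw (\<lambda>x. gdist V E x a) V {..K}" using inj by (simp add: bij_betw_def)
  then show ?thesis
    by (rule is_path_graph_if_bij_betw) (rule adjacent_iff_gdist_Suc_if_inj_on_gdist[OF assms])
qed

lemma card_ge_2_ex_neq: "2 \<le> card A \<Longrightarrow> \<exists>y\<in>A. y \<noteq> x"
  using card_mono[of "{x}" A] by force

lemma strong_resolving_set_self:
  assumes "connected_graph V E"
  shows "strong_resolving_set V E V"
  unfolding strong_resolving_set_def strongly_resolves_def
proof (intro conjI ballI)
  fix u v assume "u \<in> V" "v \<in> V"
  then have "v \<in> interval V E u v" using assms by (simp add: mem_interval_iff)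
  then show "\<exists>w\<in>V. v \<in> interval V E u w \<or> u \<in> interval V E v w" using \<open>v \<in> V\<close> by blast
qed simp

lemma strong_metric_dim_attained:
  assumes "connected_graph V E"
  obtains S where "strong_resolving_set V E S" "card S = strong_metric_dim V E"
proof -
  have "\<exists>S. strong_resolving_set V E S \<and> card S = strong_metric_dim V E"
    unfolding strong_metric_dim_def by (rule LeastI_ex) (use strong_resolving_set_self[OF assms] in blast)
  with that show ?thesis by blast
qed

lemma strong_metric_dim_eqI:
  assumes "strong_resolving_set V E S" "card S = k"
    and "\<And>S. strong_resolving_set V E S \<Longrightarrow> k \<le> card S"
  shows "strong_metric_dim V E = k"
  unfolding strong_metric_dim_def using assms by (intro Least_equality) auto

lemma card_strong_resolving_set_cart_ge_2:
  assumes "graph V E" "graph W F" and G: "connected_graph V E" and H: "connected_graph W F"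
    and "2 \<le> card V" "2 \<le> card W"
    and S: "strong_resolving_set (V \<times> W) (cart_adj E F) S"
  shows "2 \<le> card S"
proof (rule ccontr)
  assume "\<not> 2 \<le> card S"
  have "finite S"
    using S assms(1,2) by (auto simp: strong_resolving_set_def graph_def intro: finite_subset)
  moreover have "V \<times> W \<noteq> {}" using assms(5,6) by auto
  then have "S \<noteq> {}" using S unfolding strong_resolving_set_def by blast
  ultimately have "card S = 1" using \<open>\<not> 2 \<le> card S\<close> card_gt_0_iff[of S] by linarith
  then obtain a b where S_eq: "S = {(a, b)}" by (metis card_1_singletonE surj_pair)
  then have "a \<in> V" "b \<in> W" using S by (auto simp: strong_resolving_set_def)
  obtain a' b' where "a' \<in> V" "a' \<noteq> a" "b' \<in> W" "b' \<noteq> b"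
    using card_ge_2_ex_neq assms(5,6) by metis
  moreover have "strongly_resolves (V \<times> W) (cart_adj E F) (a, b) (a', b) (a, b')"
    using S S_eq \<open>a \<in> V\<close> \<open>b \<in> W\<close> \<open>a' \<in> V\<close> \<open>b' \<in> W\<close> by (auto simp: strong_resolving_set_def)
  ultimately show False
    using \<open>a \<in> V\<close> \<open>b \<in> W\<close> by (simp add: strongly_resolves_cart_iff[OF G H] interval_self[OF G] interval_self[OF H])
qed

lemma inj_on_gdist_if_strong_resolving_pair:
  assumes G: "connected_graph V E" and H: "connected_graph W F"
    and S: "strong_resolving_set (V \<times> W) (cart_adj E F) {(a, b), (c, d)}"
    and h: "h \<in> W" "h \<noteq> d"
  shows "inj_on (\<lambda>x. gdist V E x a) V"
proof (rule inj_onI)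
  fix g1 g2 assume g: "g1 \<in> V" "g2 \<in> V" and eq: "gdist V E g1 a = gdist V E g2 a"
  have "a \<in> V" "b \<in> W" "c \<in> V" "d \<in> W" using S by (auto simp: strong_resolving_set_def)
  have by_cd: "strongly_resolves (V \<times> W) (cart_adj E F) (c, d) (g1, h1) (g2, h2)"
    if "g1 \<noteq> g2" "h1 \<in> W" "h2 \<in> W" for h1 h2
  proof -
    have "\<not> strongly_resolves (V \<times> W) (cart_adj E F) (a, b) (g1, h1) (g2, h2)"
      using eq_if_mem_interval_gdist_eq[OF G g(1) \<open>a \<in> V\<close>, of g2]
        eq_if_mem_interval_gdist_eq[OF G g(2) \<open>a \<in> V\<close>, of g1]
        eq that g \<open>a \<in> V\<close> \<open>b \<in> W\<close> by (auto simp: strongly_resolves_cart_iff[OF G H])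
    then show ?thesis using S g that unfolding strong_resolving_set_def by blast
  qed
  show "g1 = g2"
  proof (rule ccontr)
    assume "g1 \<noteq> g2"
    then have "g1 \<in> interval V E g2 c" "g2 \<in> interval V E g1 c"
      using by_cd[of d h] by_cd[of h d] h g \<open>c \<in> V\<close> \<open>d \<in> W\<close>
      by (auto simp: strongly_resolves_cart_iff[OF G H] interval_self[OF H])
    then show False using interval_antisym[OF G g \<open>c \<in> V\<close>] \<open>g1 \<noteq> g2\<close> by blast
  qed
qed

lemma is_path_graph_if_strong_resolving_pair:
  assumes "graph V E" and G: "connected_graph V E" and H: "connected_graph W F" and "2 \<le> card W"
    and S: "strong_resolving_set (V \<times> W) (cart_adj E F) {(a, b), (c, d)}"
  shows "is_path_graph V E"
proof -
  obtain h where "h \<in> W" "h \<noteq> d" using card_ge_2_ex_neq[OF \<open>2 \<le> card W\<close>] by blast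
  moreover have "a \<in> V" using S by (auto simp: strong_resolving_set_def)
  ultimately show ?thesis
    using is_path_graph_if_inj_on_gdist[OF \<open>graph V E\<close> G] inj_on_gdist_if_strong_resolving_pair[OF G H S]
    by blast
qed

lemma strong_resolving_pair_if_path_graphs:
  assumes "is_path_graph V E" "is_path_graph W F"
    and G: "connected_graph V E" and H: "connected_graph W F" and "2 \<le> card W"
  obtains S where "strong_resolving_set (V \<times> W) (cart_adj E F) S" "card S = 2"
proof -
  obtain xs where xs: "distinct xs" "set xs = V"
    "\<And>u v. E u v \<longleftrightarrow> (\<exists>i. Suc i < length xs \<and> {u, v} = {xs ! i, xs ! Suc i})"
    using is_path_graphE[OF assms(1)] by blast
  obtain ys where ys: "distinct ys" "set ys = W"
    "\<And>u v. F u v \<longleftrightarrow> (\<exists>i. Suc i < length ys \<and> {u, v} = {ys ! i, ys ! Suc i})"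
    using is_path_graphE[OF assms(2)] by blast
  define n where "n = length ys"
  have "xs \<noteq> []" using xs(2) G by (auto simp: connected_graph_def)
  have "2 \<le> n" using \<open>2 \<le> card W\<close> distinct_card[OF ys(1)] ys(2) by (simp add: n_def)
  define S where "S = {(xs ! 0, ys ! 0), (xs ! 0, ys ! (n - 1))}"
  have n: "0 < n" "n - 1 < n" "0 \<noteq> n - 1" using \<open>2 \<le> n\<close> by linarith+
  then have "ys ! 0 \<noteq> ys ! (n - 1)" using nth_eq_iff_index_eq[OF ys(1)] by (simp add: n_def)
  then have "card S = 2" by (simp add: S_def)
  moreover have "strong_resolving_set (V \<times> W) (cart_adj E F) S"
    unfolding strong_resolving_set_def
  proof (intro conjI ballI)
    show "S \<subseteq> V \<times> W" using xs(2) ys(2) \<open>xs \<noteq> []\<close> n by (auto simp: S_def n_def)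
    fix u v assume "u \<in> V \<times> W" "v \<in> V \<times> W"
    then obtain i j k l where ijkl: "i < length xs" "j < n" "k < length xs" "l < n"
      and uv: "u = (xs ! i, ys ! j)" "v = (xs ! k, ys ! l)"
      using xs(2) ys(2) by (auto simp: n_def in_set_conv_nth)
    have "xs ! i \<in> V" "xs ! k \<in> V" "xs ! 0 \<in> V" "ys ! j \<in> W" "ys ! l \<in> W" "ys ! 0 \<in> W" "ys ! (n - 1) \<in> W"
      using ijkl xs(2) ys(2) \<open>xs \<noteq> []\<close> n by (auto simp: n_def)
    then show "\<exists>w\<in>S. strongly_resolves (V \<times> W) (cart_adj E F) w u v"
      using ijkl \<open>xs \<noteq> []\<close> n unfolding S_def uv
      by (simp add: strongly_resolves_cart_iff[OF G H] mem_interval_path_graph_iff[OF G xs]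
          mem_interval_path_graph_iff[OF H ys, folded n_def]) linarith
  qed
  ultimately show ?thesis using that by blast
qed

theorem proposition29:
  fixes V :: "'a set" and E :: "'a \<Rightarrow> 'a \<Rightarrow> bool"
    and W :: "'b set" and F :: "'b \<Rightarrow> 'b \<Rightarrow> bool"
  assumes "graph V E" and "graph W F"
    and "connected_graph V E" and "connected_graph W F"
    and "card V \<ge> 2" and "card W \<ge> 2"
  shows "strong_metric_dim (V \<times> W) (cart_adj E F) = 2 \<longleftrightarrow>
         is_path_graph V E \<and> is_path_graph W F"
proof
  assume "strong_metric_dim (V \<times> W) (cart_adj E F) = 2"
  then obtain S where S: "strong_resolving_set (V \<times> W) (cart_adj E F) S" "card S = 2"
    using strong_metric_dim_attained[OF connected_graph_cart[OF assms(3,4)]] by metis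
  then obtain a b c d where "S = {(a, b), (c, d)}" by (metis card_2_iff surj_pair)
  moreover have "strong_resolving_set (W \<times> V) (cart_adj F E) {(b, a), (d, c)}"
    using strong_resolving_set_cart_swap[OF assms(3,4) S(1)] \<open>S = {(a, b), (c, d)}\<close> by simp
  ultimately show "is_path_graph V E \<and> is_path_graph W F"
    using is_path_graph_if_strong_resolving_pair assms S(1) by metis
next
  assume "is_path_graph V E \<and> is_path_graph W F"
  then obtain S where "strong_resolving_set (V \<times> W) (cart_adj E F) S" "card S = 2"
    using strong_resolving_pair_if_path_graphs assms(3,4,6) by metis
  then show "strong_metric_dim (V \<times> W) (cart_adj E F) = 2"
    using strong_metric_dim_eqI card_strong_resolving_set_cart_ge_2[OF assms] by metis
qed

end
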